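(* Let $\mathfrak p\triangleleft A=\mathbb F_q[T]$ be a nonzero prime ideal with generator $f$, and let $\phi:A\to\mathcal O_{\mathfrak p}\{\tau\}$ be a Drinfeld module of rank two over $\mathcal O_{\mathfrak p}$ with supersingular reduction. Then the $\mathrm{Gal}(\overline F_{\mathfrak p}|F_{\mathfrak p})$-module $U=\phi[\mathfrak p](\overline F_{\mathfrak p})$ is irreducible.
   Context: $F_{\mathfrak p}$ is the completion of $F=\mathbb F_q(T)$ at $\mathfrak p$, $\mathcal O_{\mathfrak p}$ its valuation ring, $\overline F_{\mathfrak p}$ a separable closure; $\mathfrak p$ also denotes the normalized valuation. A Drinfeld module of rank two over $\mathcal O_{\mathfrak p}$ is an $\mathbb F_q$-algebra homomorphism $\phi:A\to\mathcal O_{\mathfrak p}\{\tau\}$ (skew polynomials, $\tau b=b^q\tau$) with $\phi(T)=T+g\tau+\Delta\tau^2$, $g\in\mathcal O_{\mathfrak p}$, $\Delta\in\mathcal O_{\mathfrak p}^*$. $U=\phi[\mathfrak p](\overline F_{\mathfrak p})$ is the $\mathfrak p$-torsion, a two-dimensional vector space over $A/\mathfrak p$ with linear Galois action. Write $\phi(f)=\sum_{n=0}^{2\deg(\mathfrak p)}a_n\tau^n$; $\phi$ has supersingular reduction if $\mathfrak p(a_i)>0$ for all $i<2\deg(\mathfrak p)$ and $\mathfrak p(a_{2\deg(\mathfrak p)})=0$. *)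

theory Defs
  imports "HOL-Computational_Algebra.Computational_Algebra"
begin

text \<open>A skew polynomial sum a_i tau^i is represented by its coefficient list [a_0, a_1, ...].\<close>

definition skc :: "'b::field list \<Rightarrow> nat \<Rightarrow> 'b" where
  "skc P i = (if i < length P then P ! i else 0)"

definition skew_add :: "'b::field list \<Rightarrow> 'b list \<Rightarrow> 'b list" where
  "skew_add P Q = map (\<lambda>n. skc P n + skc Q n) [0..<max (length P) (length Q)]"

definition skew_mult :: "nat \<Rightarrow> 'b::field list \<Rightarrow> 'b list \<Rightarrow> 'b list" where
  "skew_mult q P Q =
     map (\<lambda>n. \<Sum>i\<le>n. skc P i * skc Q (n - i) ^ (q ^ i)) [0..<length P + length Q]"

definition skew_eval :: "nat \<Rightarrow> 'b::field list \<Rightarrow> 'b \<Rightarrow> 'b" where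
  "skew_eval q P x = (\<Sum>i<length P. skc P i * x ^ (q ^ i))"

text \<open>The F_q-algebra homomorphism phi : A = F_q[T] \<rightarrow> K{tau} determined by phi(T) = phiT,
  where iota : F_q[T] \<rightarrow> K is the structure map (constants c act as iota [:c:]).
  Horner: phi(c_0 + T a') = iota c_0 + phiT * phi(a').\<close>
definition drinfeld_phi ::
  "nat \<Rightarrow> ('k::field poly \<Rightarrow> 'b::field) \<Rightarrow> 'b list \<Rightarrow> 'k poly \<Rightarrow> 'b list" where
  "drinfeld_phi q \<iota> phiT a =
     foldr (\<lambda>c acc. skew_add [\<iota> [:c:]] (skew_mult q phiT acc)) (coeffs a) []"

definition is_subfield :: "'b::field set \<Rightarrow> bool" where
  "is_subfield K \<longleftrightarrow> 0 \<in> K \<and> 1 \<in> K \<and> (\<forall>x\<in>K. \<forall>y\<in>K. x + y \<in> K \<and> x * y \<in> K)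
     \<and> (\<forall>x\<in>K. - x \<in> K \<and> inverse x \<in> K)"

definition is_ring_hom :: "('a::comm_ring_1 \<Rightarrow> 'b::comm_ring_1) \<Rightarrow> bool" where
  "is_ring_hom h \<longleftrightarrow> h 1 = 1 \<and> (\<forall>x y. h (x + y) = h x + h y \<and> h (x * y) = h x * h y)"

text \<open>v is a discrete valuation on K (value on 0 irrelevant; 0 has valuation +infinity).\<close>
definition is_valuation_on :: "'b::field set \<Rightarrow> ('b \<Rightarrow> int) \<Rightarrow> bool" where
  "is_valuation_on K v \<longleftrightarrow>
     (\<forall>x\<in>K. \<forall>y\<in>K. x \<noteq> 0 \<longrightarrow> y \<noteq> 0 \<longrightarrow> v (x * y) = v x + v y) \<and>
     (\<forall>x\<in>K. \<forall>y\<in>K. x \<noteq> 0 \<longrightarrow> y \<noteq> 0 \<longrightarrow> x + y \<noteq> 0 \<longrightarrow> v (x + y) \<ge> min (v x) (v y))"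

text \<open>"v(x) \<ge> n" with the convention v(0) = +infinity.\<close>
definition val_ge :: "('b::field \<Rightarrow> int) \<Rightarrow> 'b \<Rightarrow> int \<Rightarrow> bool" where
  "val_ge v x n \<longleftrightarrow> x = 0 \<or> v x \<ge> n"

definition val_complete :: "'b::field set \<Rightarrow> ('b \<Rightarrow> int) \<Rightarrow> bool" where
  "val_complete K v \<longleftrightarrow>
     (\<forall>s::nat \<Rightarrow> 'b. (\<forall>m. s m \<in> K) \<longrightarrow> (\<forall>n. \<exists>N. \<forall>m\<ge>N. \<forall>k\<ge>N. val_ge v (s m - s k) n) \<longrightarrow>
        (\<exists>x\<in>K. \<forall>n. \<exists>N. \<forall>m\<ge>N. val_ge v (s m - x) n))"

text \<open>(K, v, iota) is the completion F_p of F = F_q(T) at the prime p = (f):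
  iota : F_q[T] \<rightarrow> K an injective ring homomorphism whose fraction field is dense in K,
  v a discrete valuation on K extending the normalized p-adic valuation, K complete.\<close>
definition is_completion_at ::
  "'k::field_gcd poly \<Rightarrow> ('k poly \<Rightarrow> 'b::field) \<Rightarrow> 'b set \<Rightarrow> ('b \<Rightarrow> int) \<Rightarrow> bool" where
  "is_completion_at f \<iota> K v \<longleftrightarrow>
     is_subfield K \<and> is_ring_hom \<iota> \<and> inj \<iota> \<and> range \<iota> \<subseteq> K \<and>
     is_valuation_on K v \<and>
     (\<forall>a. a \<noteq> 0 \<longrightarrow> v (\<iota> a) = int (multiplicity f a)) \<and>
     (\<forall>x\<in>K. \<forall>n. \<exists>a b. b \<noteq> 0 \<and> val_ge v (x - \<iota> a / \<iota> b) n) \<and>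
     val_complete K v"

definition separable_poly :: "'b::field poly \<Rightarrow> bool" where
  "separable_poly P \<longleftrightarrow> P \<noteq> 0 \<and> coprime P (pderiv P)"

text \<open>The whole type 'b is a separable closure of the subfield K.\<close>
definition is_sep_closure_of :: "'b::field set \<Rightarrow> bool" where
  "is_sep_closure_of K \<longleftrightarrow>
     (\<forall>x. \<exists>P. separable_poly P \<and> (\<forall>i. coeff P i \<in> K) \<and> poly P x = 0) \<and>
     (\<forall>P::'b poly. separable_poly P \<and> degree P \<ge> 1 \<longrightarrow> (\<exists>x. poly P x = 0))"

definition galois_group :: "'b::field set \<Rightarrow> ('b \<Rightarrow> 'b) set" where
  "galois_group K = {\<sigma>. bij \<sigma> \<and> is_ring_hom \<sigma> \<and> (\<forall>x\<in>K. \<sigma> x = x)}"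

definition torsion :: "nat \<Rightarrow> ('k::field poly \<Rightarrow> 'b::field) \<Rightarrow> 'b list \<Rightarrow> 'k poly \<Rightarrow> 'b set" where
  "torsion q \<iota> phiT f = {x. skew_eval q (drinfeld_phi q \<iota> phiT f) x = 0}"

text \<open>W is an A-submodule (equivalently an A/p-subspace) of U for the action a.x = phi_a(x).\<close>
definition is_phi_submodule ::
  "nat \<Rightarrow> ('k::field poly \<Rightarrow> 'b::field) \<Rightarrow> 'b list \<Rightarrow> 'b set \<Rightarrow> 'b set \<Rightarrow> bool" where
  "is_phi_submodule q \<iota> phiT U W \<longleftrightarrow> W \<subseteq> U \<and> 0 \<in> W \<and>
     (\<forall>x\<in>W. \<forall>y\<in>W. x + y \<in> W) \<and>
     (\<forall>a. \<forall>x\<in>W. skew_eval q (drinfeld_phi q \<iota> phiT a) x \<in> W)"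

definition irreducible_galois_module ::
  "nat \<Rightarrow> ('k::field poly \<Rightarrow> 'b::field) \<Rightarrow> 'b list \<Rightarrow> ('b \<Rightarrow> 'b) set \<Rightarrow> 'b set \<Rightarrow> bool" where
  "irreducible_galois_module q \<iota> phiT G U \<longleftrightarrow> U \<noteq> {0} \<and>
     (\<forall>W. is_phi_submodule q \<iota> phiT U W \<longrightarrow> (\<forall>\<sigma>\<in>G. \<sigma> ` W \<subseteq> W) \<longrightarrow> W = {0} \<or> W = U)"

end

theory Submission
  imports Defs
begin

(* With d = deg f, the p-torsion is the zero set of phi_f(x) = sum_{i <= 2d} a_i x^(q^i), so the
   nonzero torsion points are the roots of F(x) = sum_{i <= 2d} a_i x^(q^i - 1). The constant
   coefficient a_0 = f has valuation 1, supersingular reduction puts a_1, ..., a_{2d-1} into the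
   maximal ideal and makes a_{2d} a unit, so F is Eisenstein and thus irreducible over F_p; it is
   separable because (x F(x))' = a_0. Hence the Galois group acts transitively on the roots of F
   (an embedding w |-> u of F_p(w) extends to an automorphism of the separable closure by Zorn's
   lemma), and a Galois-stable subset of U containing a nonzero point is all of U. *)

lemma is_subfieldD:
  assumes "is_subfield L"
  shows "0 \<in> L" "1 \<in> L" "x \<in> L \<Longrightarrow> y \<in> L \<Longrightarrow> x + y \<in> L"
    "x \<in> L \<Longrightarrow> y \<in> L \<Longrightarrow> x * y \<in> L" "x \<in> L \<Longrightarrow> - x \<in> L"
    "x \<in> L \<Longrightarrow> inverse x \<in> L" "x \<in> L \<Longrightarrow> y \<in> L \<Longrightarrow> x - y \<in> L"
  using assms unfolding is_subfield_def diff_conv_add_uminus by blast+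

lemma is_subfield_UNIV: "is_subfield UNIV"
  by (simp add: is_subfield_def)

lemma subfield_sum: "is_subfield L \<Longrightarrow> (\<And>i. i \<in> S \<Longrightarrow> f i \<in> L) \<Longrightarrow> sum f S \<in> L"
  by (induction S rule: infinite_finite_induct) (auto simp: is_subfieldD)

lemma subfield_power: "is_subfield L \<Longrightarrow> x \<in> L \<Longrightarrow> x ^ n \<in> L"
  by (induction n) (auto simp: is_subfieldD)

definition poly_over :: "'a::field set \<Rightarrow> 'a poly \<Rightarrow> bool" where
  "poly_over L p \<longleftrightarrow> (\<forall>i. coeff p i \<in> L)"

context
  fixes L :: "'a::field set"
  assumes L: "is_subfield L"
begin

lemma poly_over_0 [simp]: "poly_over L 0"
  using is_subfieldD[OF L] by (simp add: poly_over_def)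

lemma poly_over_const: "c \<in> L \<Longrightarrow> poly_over L [:c:]"
  using is_subfieldD[OF L] by (simp add: poly_over_def coeff_pCons split: nat.split)

lemma poly_over_1 [simp]: "poly_over L 1"
  using poly_over_const[of 1] is_subfieldD[OF L] by (simp add: one_pCons)

lemma poly_over_X: "poly_over L [:0, 1:]"
  using is_subfieldD[OF L] by (simp add: poly_over_def coeff_pCons split: nat.split)

lemma poly_over_add: "poly_over L p \<Longrightarrow> poly_over L r \<Longrightarrow> poly_over L (p + r)"
  using is_subfieldD[OF L] by (simp add: poly_over_def)

lemma poly_over_diff: "poly_over L p \<Longrightarrow> poly_over L r \<Longrightarrow> poly_over L (p - r)"
  using is_subfieldD[OF L] by (simp add: poly_over_def)

lemma poly_over_uminus: "poly_over L p \<Longrightarrow> poly_over L (- p)"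
  using is_subfieldD[OF L] by (simp add: poly_over_def)

lemma poly_over_smult: "c \<in> L \<Longrightarrow> poly_over L p \<Longrightarrow> poly_over L (smult c p)"
  using is_subfieldD[OF L] by (simp add: poly_over_def)

lemma poly_over_monom: "c \<in> L \<Longrightarrow> poly_over L (monom c n)"
  using is_subfieldD[OF L] by (simp add: poly_over_def)

lemma poly_over_mult: "poly_over L p \<Longrightarrow> poly_over L r \<Longrightarrow> poly_over L (p * r)"
  unfolding poly_over_def coeff_mult by (auto intro!: subfield_sum[OF L] is_subfieldD(4)[OF L])

lemma poly_over_division:
  assumes "poly_over L m" "m \<noteq> 0" "poly_over L p"
  shows "\<exists>d r. poly_over L d \<and> poly_over L r \<and> p = d * m + r \<and> (r = 0 \<or> degree r < degree m)"
  using assms(3)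
proof (induction "degree p" arbitrary: p rule: less_induct)
  case less
  show ?case
  proof (cases "p = 0 \<or> degree p < degree m")
    case True
    then show ?thesis using less.prems by (intro exI[of _ 0] exI[of _ p]) auto
  next
    case False
    define t where "t = monom (lead_coeff p / lead_coeff m) (degree p - degree m)"
    have t: "poly_over L t"
      using less.prems assms(1) is_subfieldD[OF L] unfolding t_def
      by (intro poly_over_monom) (simp add: poly_over_def divide_inverse)
    have t0: "t \<noteq> 0" using False assms(2) by (simp add: t_def)
    have deg_tm: "degree (t * m) = degree p"
      using False assms(2) t0 by (simp add: t_def degree_mult_eq degree_monom_eq)
    have lc_tm: "lead_coeff (t * m) = lead_coeff p"
      using False assms(2) by (simp only: lead_coeff_mult) (simp add: t_def degree_monom_eq)
    have "degree (p - t * m) \<le> degree p" by (rule degree_diff_le) (simp_all add: deg_tm)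
    moreover have "coeff (p - t * m) (degree p) = 0" using deg_tm lc_tm by simp
    ultimately have "p - t * m = 0 \<or> degree (p - t * m) < degree p"
      by (metis le_neq_implies_less leading_coeff_0_iff)
    moreover have p': "poly_over L (p - t * m)"
      using less.prems assms(1) t by (intro poly_over_diff poly_over_mult)
    ultimately obtain d r where dr: "poly_over L d" "poly_over L r" "p - t * m = d * m + r"
      "r = 0 \<or> degree r < degree m"
    proof (elim disjE)
      assume "p - t * m = 0"
      then show thesis using that[of 0 0] by simp
    qed (use less.hyps in blast)
    have "p = (d + t) * m + r" using dr(3) by (simp add: algebra_simps)
    then show ?thesis using dr t by (intro exI[of _ "d + t"] exI[of _ r]) (simp add: poly_over_add)
  qed
qed

lemma poly_over_div_mod:
  assumes "poly_over L p" "poly_over L m"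
  shows "poly_over L (p div m)" "poly_over L (p mod m)"
proof -
  have "poly_over L (p div m) \<and> poly_over L (p mod m)"
  proof (cases "m = 0")
    case False
    from poly_over_division[OF assms(2) False assms(1)] obtain d r where dr: "poly_over L d"
      "poly_over L r" "p = d * m + r" "r = 0 \<or> degree r < degree m" by blast
    then have "r div m = 0" "r mod m = r" by (auto simp: div_poly_less mod_poly_less)
    then show ?thesis using dr False by simp
  qed (use assms in simp)
  then show "poly_over L (p div m)" "poly_over L (p mod m)" by auto
qed

end

definition is_min_poly :: "'a::field set \<Rightarrow> 'a \<Rightarrow> 'a poly \<Rightarrow> bool" where
  "is_min_poly L y m \<longleftrightarrow> poly_over L m \<and> m \<noteq> 0 \<and> poly m y = 0 \<and>
     (\<forall>p. poly_over L p \<longrightarrow> p \<noteq> 0 \<longrightarrow> poly p y = 0 \<longrightarrow> degree m \<le> degree p)"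

definition adjoin :: "'a::field set \<Rightarrow> 'a \<Rightarrow> 'a set" where
  "adjoin L y = (\<lambda>p. poly p y) ` {p. poly_over L p}"

lemma min_poly_exists:
  assumes "poly_over L p" "p \<noteq> 0" "poly p y = 0"
  shows "\<exists>m. is_min_poly L y m"
proof -
  define n where "n = (LEAST n. \<exists>p. poly_over L p \<and> p \<noteq> 0 \<and> poly p y = 0 \<and> degree p = n)"
  have "\<exists>p. poly_over L p \<and> p \<noteq> 0 \<and> poly p y = 0 \<and> degree p = n"
    unfolding n_def by (rule LeastI_ex) (use assms in blast)
  then obtain m where "poly_over L m" "m \<noteq> 0" "poly m y = 0" "degree m = n" by blast
  moreover have "n \<le> degree p" if "poly_over L p" "p \<noteq> 0" "poly p y = 0" for p
    unfolding n_def by (rule Least_le) (use that in blast)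
  ultimately show ?thesis unfolding is_min_poly_def by auto
qed

lemma min_poly_degree_pos:
  assumes "is_min_poly L y m"
  shows "0 < degree m"
proof (rule ccontr)
  assume "\<not> 0 < degree m"
  then have "m = [:coeff m 0:]" using degree_0_id[of m] by simp
  then show False using assms unfolding is_min_poly_def by (metis poly_const_conv pCons_0_0)
qed

context
  fixes L :: "'a::field set"
  assumes L: "is_subfield L"
begin

lemma min_poly_dvd:
  assumes m: "is_min_poly L y m" and p: "poly_over L p" "poly p y = 0"
  shows "p = p div m * m"
proof -
  have m': "poly_over L m" "m \<noteq> 0" "poly m y = 0" using m by (auto simp: is_min_poly_def)
  have "poly p y = poly (p div m) y * poly m y + poly (p mod m) y"
    by (subst div_mult_mod_eq[of p m, symmetric]) (simp only: poly_add poly_mult)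
  then have "poly (p mod m) y = 0" using p(2) m'(3) by simp
  moreover have "poly_over L (p mod m)" by (rule poly_over_div_mod(2)[OF L p(1) m'(1)])
  ultimately have "p mod m = 0"
    using m degree_mod_less'[OF m'(2)] leD unfolding is_min_poly_def by blast
  then show ?thesis by (metis add_0_right div_mult_mod_eq)
qed

text \<open>A generator of least degree of the ideal spanned by p and the minimal polynomial divides
  both, hence is a nonzero constant.\<close>
lemma min_poly_inverse:
  assumes m: "is_min_poly L y m" and p: "poly_over L p" "poly p y \<noteq> 0"
  shows "\<exists>a. poly_over L a \<and> poly a y * poly p y = 1"
proof -
  have m': "poly_over L m" "m \<noteq> 0" "poly m y = 0" using m by (auto simp: is_min_poly_def)
  define I where "I = {a * p + b * m |a b. poly_over L a \<and> poly_over L b}"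
  have "p = 1 * p + 0 * m" "m = 0 * p + 1 * m" by simp_all
  then have pI: "p \<in> I" and mI: "m \<in> I"
    unfolding I_def using poly_over_0[OF L] poly_over_1[OF L] by blast+
  have p0: "p \<noteq> 0" using p by auto
  obtain g where g: "g \<in> I" "g \<noteq> 0" and gmin: "\<And>h. h \<in> I \<Longrightarrow> h \<noteq> 0 \<Longrightarrow> degree g \<le> degree h"
    using ex_has_least_nat[of "\<lambda>h. h \<in> I \<and> h \<noteq> 0" p degree] pI p0 by blast
  from g(1) obtain a b where ab: "poly_over L a" "poly_over L b" "g = a * p + b * m"
    unfolding I_def by blast
  have gL: "poly_over L g" using ab p m' by (simp add: poly_over_add[OF L] poly_over_mult[OF L])
  have g_dvd: "h = h div g * g" if "h \<in> I" for h
  proof -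
    from that obtain a' b' where ab': "poly_over L a'" "poly_over L b'" "h = a' * p + b' * m"
      unfolding I_def by blast
    define d where "d = h div g"
    have dL: "poly_over L d"
      unfolding d_def using ab' p m' gL by (intro poly_over_div_mod(1)[OF L]) (simp add: poly_over_add[OF L] poly_over_mult[OF L])
    have "h mod g = h - d * g" by (simp add: d_def minus_div_mult_eq_mod)
    also have "\<dots> = (a' - d * a) * p + (b' - d * b) * m" using ab(3) ab'(3) by (simp add: algebra_simps)
    finally have "h mod g = (a' - d * a) * p + (b' - d * b) * m" .
    then have "h mod g \<in> I"
      unfolding I_def using ab ab' dL by (auto intro!: poly_over_diff[OF L] poly_over_mult[OF L])
    then have "h mod g = 0" using gmin degree_mod_less'[OF g(2)] leD by blast
    then show ?thesis by (metis add_0_right div_mult_mod_eq)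
  qed
  have gy: "poly g y \<noteq> 0" using p(2) g_dvd[OF pI] by (metis mult_zero_right poly_mult)
  have "degree g = 0"
  proof -
    have md: "m = m div g * g" by (rule g_dvd[OF mI])
    have "m div g \<noteq> 0" using m'(2) md by (metis mult_zero_left)
    moreover have "poly (m div g) y = 0" using m'(3) gy md by (metis mult_eq_0_iff poly_mult)
    moreover have "poly_over L (m div g)" by (rule poly_over_div_mod(1)[OF L m'(1) gL])
    ultimately have "degree m \<le> degree (m div g)" using m unfolding is_min_poly_def by blast
    moreover have "degree m = degree (m div g) + degree g"
      using md \<open>m div g \<noteq> 0\<close> g(2) by (metis degree_mult_eq)
    ultimately show ?thesis by simp
  qed
  then obtain c where c: "g = [:c:]" by (metis degree_0_id)
  have "c \<in> L" using gL c coeff_pCons_0[of c 0] unfolding poly_over_def by metis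
  moreover have "c \<noteq> 0" using g(2) c by simp
  moreover have "poly a y * poly p y = c" using arg_cong[OF ab(3), of "\<lambda>h. poly h y"] c m'(3) by simp
  ultimately show ?thesis
    using ab(1) by (intro exI[of _ "smult (inverse c) a"]) (auto simp: poly_over_smult[OF L] is_subfieldD[OF L] mult.assoc)
qed

lemma is_subfield_adjoin:
  assumes "is_min_poly L y m"
  shows "is_subfield (adjoin L y)"
proof -
  have closed: "poly p y \<in> adjoin L y" if "poly_over L p" for p
    using that unfolding adjoin_def by blast
  have inverse: "inverse (poly p y) \<in> adjoin L y" if p: "poly_over L p" for p
  proof (cases "poly p y = 0")
    case False
    with min_poly_inverse[OF assms p] obtain a where "poly_over L a" "poly a y * poly p y = 1"
      by blast
    then show ?thesis using closed by (metis inverse_unique mult.commute)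
  qed (use closed[OF poly_over_0[OF L]] in simp)
  show ?thesis
    unfolding is_subfield_def
  proof (intro conjI ballI)
    show "0 \<in> adjoin L y" "1 \<in> adjoin L y"
      using closed[OF poly_over_0[OF L]] closed[OF poly_over_1[OF L]] by simp_all
  next
    fix x x' assume "x \<in> adjoin L y" "x' \<in> adjoin L y"
    then obtain p p' where "poly_over L p" "poly_over L p'" "x = poly p y" "x' = poly p' y"
      unfolding adjoin_def by blast
    then show "x + x' \<in> adjoin L y" "x * x' \<in> adjoin L y"
      using closed[OF poly_over_add[OF L]] closed[OF poly_over_mult[OF L]] by simp_all
  next
    fix x assume "x \<in> adjoin L y"
    then obtain p where "poly_over L p" "x = poly p y" unfolding adjoin_def by blast
    then show "- x \<in> adjoin L y" "inverse x \<in> adjoin L y"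
      using closed[OF poly_over_uminus[OF L]] inverse by simp_all
  qed
qed

end

definition ring_hom_on :: "'a::field set \<Rightarrow> ('a \<Rightarrow> 'a) \<Rightarrow> bool" where
  "ring_hom_on L s \<longleftrightarrow> s 1 = 1 \<and> (\<forall>x\<in>L. \<forall>y\<in>L. s (x + y) = s x + s y \<and> s (x * y) = s x * s y)"

lemma is_ring_hom_0: "is_ring_hom h \<Longrightarrow> h 0 = 0"
  unfolding is_ring_hom_def by (metis add_cancel_right_right add_0)

lemma is_ring_hom_of_nat: "is_ring_hom h \<Longrightarrow> h (of_nat n) = of_nat n"
  by (induction n) (simp_all add: is_ring_hom_0, simp add: is_ring_hom_def)

context
  fixes L :: "'a::field set" and s :: "'a \<Rightarrow> 'a"
  assumes L: "is_subfield L" and s: "ring_hom_on L s"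
begin

lemma ring_hom_on_1: "s 1 = 1"
  using s unfolding ring_hom_on_def by blast

lemma ring_hom_on_add: "x \<in> L \<Longrightarrow> y \<in> L \<Longrightarrow> s (x + y) = s x + s y"
  using s unfolding ring_hom_on_def by blast

lemma ring_hom_on_mult: "x \<in> L \<Longrightarrow> y \<in> L \<Longrightarrow> s (x * y) = s x * s y"
  using s unfolding ring_hom_on_def by blast

lemma ring_hom_on_0: "s 0 = 0"
  using ring_hom_on_add[of 0 0] is_subfieldD(1)[OF L] by (metis add_cancel_right_right)

lemma ring_hom_on_uminus: "x \<in> L \<Longrightarrow> s (- x) = - s x"
  using ring_hom_on_add[of x "- x"] is_subfieldD(5)[OF L] ring_hom_on_0
  by (simp add: eq_neg_iff_add_eq_0 add.commute)

lemma ring_hom_on_diff: "x \<in> L \<Longrightarrow> y \<in> L \<Longrightarrow> s (x - y) = s x - s y"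
  using ring_hom_on_add[of x "- y"] ring_hom_on_uminus[of y] is_subfieldD(5)[OF L] by simp

lemma ring_hom_on_eq_0_iff: "x \<in> L \<Longrightarrow> s x = 0 \<longleftrightarrow> x = 0"
  using ring_hom_on_mult[of x "inverse x"] is_subfieldD(6)[OF L] ring_hom_on_1 ring_hom_on_0
  by (cases "x = 0") auto

lemma ring_hom_on_inj: "inj_on s L"
  using ring_hom_on_eq_0_iff ring_hom_on_diff is_subfieldD(7)[OF L] by (intro inj_onI) force

lemma ring_hom_on_sum: "(\<And>i. i \<in> S \<Longrightarrow> f i \<in> L) \<Longrightarrow> s (sum f S) = (\<Sum>i\<in>S. s (f i))"
  by (induction S rule: infinite_finite_induct)
    (simp_all add: ring_hom_on_0 ring_hom_on_add subfield_sum[OF L])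

lemma ring_hom_on_power: "x \<in> L \<Longrightarrow> s (x ^ n) = s x ^ n"
  by (induction n) (simp_all add: ring_hom_on_1 ring_hom_on_mult subfield_power[OF L])

lemma coeff_map_poly_hom: "coeff (map_poly s p) i = s (coeff p i)"
  by (simp add: coeff_map_poly ring_hom_on_0)

lemma map_poly_hom_add:
  "poly_over L p \<Longrightarrow> poly_over L r \<Longrightarrow> map_poly s (p + r) = map_poly s p + map_poly s r"
  by (rule poly_eqI) (simp add: coeff_map_poly_hom ring_hom_on_add poly_over_def)

lemma map_poly_hom_diff:
  "poly_over L p \<Longrightarrow> poly_over L r \<Longrightarrow> map_poly s (p - r) = map_poly s p - map_poly s r"
  by (rule poly_eqI) (simp add: coeff_map_poly_hom ring_hom_on_diff poly_over_def)

lemma map_poly_hom_mult: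
  assumes "poly_over L p" "poly_over L r"
  shows "map_poly s (p * r) = map_poly s p * map_poly s r"
proof (rule poly_eqI)
  fix n
  have "s (\<Sum>i\<le>n. coeff p i * coeff r (n - i)) = (\<Sum>i\<le>n. s (coeff p i) * s (coeff r (n - i)))"
    using assms unfolding poly_over_def
    by (simp add: ring_hom_on_sum ring_hom_on_mult is_subfieldD(4)[OF L])
  then show "coeff (map_poly s (p * r)) n = coeff (map_poly s p * map_poly s r) n"
    by (simp add: coeff_map_poly_hom coeff_mult)
qed

lemma map_poly_hom_const: "map_poly s [:c:] = [:s c:]"
  by (rule poly_eqI) (simp add: coeff_map_poly_hom coeff_pCons ring_hom_on_0 split: nat.split)

lemma map_poly_hom_X: "map_poly s [:0, 1:] = [:0, 1:]"
  by (rule poly_eqI)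
    (simp add: coeff_map_poly_hom coeff_pCons ring_hom_on_0 ring_hom_on_1 split: nat.split)

lemma degree_map_poly_hom:
  assumes "poly_over L p"
  shows "degree (map_poly s p) = degree p"
proof (cases "p = 0")
  case False
  then have "coeff (map_poly s p) (degree p) \<noteq> 0"
    using assms by (simp add: coeff_map_poly_hom ring_hom_on_eq_0_iff poly_over_def)
  then show ?thesis using le_degree map_poly_degree_leq le_antisym by blast
qed simp

lemma ring_hom_on_poly:
  assumes "poly_over L p" "x \<in> L"
  shows "s (poly p x) = poly (map_poly s p) (s x)"
proof -
  have "s (poly p x) = (\<Sum>i\<le>degree p. s (coeff p i) * s x ^ i)"
    using assms unfolding poly_altdef poly_over_def
    by (simp add: ring_hom_on_sum ring_hom_on_mult ring_hom_on_power subfield_power[OF L]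
        is_subfieldD(4)[OF L])
  also have "\<dots> = poly (map_poly s p) (s x)"
    unfolding poly_altdef[of "map_poly s p"] degree_map_poly_hom[OF assms(1)]
    by (simp add: coeff_map_poly_hom)
  finally show ?thesis .
qed

lemma map_poly_hom_fixed: "(\<forall>x\<in>K. s x = x) \<Longrightarrow> poly_over K p \<Longrightarrow> map_poly s p = p"
  by (rule poly_eqI) (simp add: coeff_map_poly_hom poly_over_def)

end

lemma separable_poly_factor:
  assumes "separable_poly (a * b)"
  shows "separable_poly a"
  unfolding separable_poly_def
proof
  show "a \<noteq> 0" using assms by (auto simp: separable_poly_def)
  show "coprime a (pderiv a)"
  proof (rule coprimeI)
    fix c assume "c dvd a" "c dvd pderiv a"
    then have "c dvd a * b" "c dvd pderiv (a * b)" by (simp_all add: pderiv_mult)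
    then show "is_unit c" using assms unfolding separable_poly_def by (meson coprime_common_divisor)
  qed
qed

section \<open>Extension of embeddings\<close>

text \<open>Partial embeddings fixing K are represented by their graphs, so that a chain of them is
  bounded by its union when applying Zorn's lemma.\<close>

definition partial_emb :: "'a::field set \<Rightarrow> ('a \<times> 'a) set \<Rightarrow> bool" where
  "partial_emb K G \<longleftrightarrow> single_valued G \<and> is_subfield (Domain G) \<and> (1, 1) \<in> G \<and>
     (\<forall>a b c d. (a, b) \<in> G \<longrightarrow> (c, d) \<in> G \<longrightarrow> (a + c, b + d) \<in> G \<and> (a * c, b * d) \<in> G) \<and>
     Id_on K \<subseteq> G"

definition emb_fun :: "('a \<times> 'a) set \<Rightarrow> 'a \<Rightarrow> 'a" where
  "emb_fun G x = (THE y. (x, y) \<in> G)"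

definition emb_adjoin :: "('a::field \<times> 'a) set \<Rightarrow> 'a \<Rightarrow> 'a \<Rightarrow> ('a \<times> 'a) set" where
  "emb_adjoin G y z = (\<lambda>p. (poly p y, poly (map_poly (emb_fun G) p) z)) ` {p. poly_over (Domain G) p}"

lemma emb_adjoinE:
  assumes "(x, w) \<in> emb_adjoin G y z"
  obtains p where "poly_over (Domain G) p" "x = poly p y" "w = poly (map_poly (emb_fun G) p) z"
  using assms unfolding emb_adjoin_def by auto

lemma partial_emb_Id_on:
  assumes "is_subfield K"
  shows "partial_emb K (Id_on K)"
proof -
  have "Domain (Id_on K) = K" by auto
  then show ?thesis
    using assms is_subfieldD[OF assms] unfolding partial_emb_def single_valued_def by auto
qed

context
  fixes K :: "'a::field set" and G :: "('a \<times> 'a) set"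
  assumes G: "partial_emb K G"
begin

lemma partial_emb_subfield: "is_subfield (Domain G)"
  using G unfolding partial_emb_def by blast

lemma emb_fun_eq: "(x, y) \<in> G \<Longrightarrow> emb_fun G x = y"
  unfolding emb_fun_def
  by (rule the_equality) (use G in \<open>auto simp: partial_emb_def single_valued_def\<close>)

lemma emb_fun_fixes: "x \<in> K \<Longrightarrow> emb_fun G x = x"
  using G by (intro emb_fun_eq) (auto simp: partial_emb_def)

lemma partial_emb_Domain: "K \<subseteq> Domain G"
  using G unfolding partial_emb_def by blast

lemma ring_hom_on_emb_fun: "ring_hom_on (Domain G) (emb_fun G)"
  unfolding ring_hom_on_def
proof (intro conjI ballI)
  show "emb_fun G 1 = 1" using G emb_fun_eq unfolding partial_emb_def by blast
  fix x y assume "x \<in> Domain G" "y \<in> Domain G"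
  then obtain x' y' where xy: "(x, x') \<in> G" "(y, y') \<in> G" by blast
  then have "(x + y, x' + y') \<in> G" "(x * y, x' * y') \<in> G" using G unfolding partial_emb_def by blast+
  then show "emb_fun G (x + y) = emb_fun G x + emb_fun G y" "emb_fun G (x * y) = emb_fun G x * emb_fun G y"
    using xy by (simp_all add: emb_fun_eq)
qed

lemma emb_adjoin_single_valued:
  assumes m: "is_min_poly (Domain G) y m" and z: "poly (map_poly (emb_fun G) m) z = 0"
  shows "single_valued (emb_adjoin G y z)"
proof -
  note L = partial_emb_subfield and s = ring_hom_on_emb_fun
  have "poly (map_poly (emb_fun G) p) z = poly (map_poly (emb_fun G) p') z"
    if p: "poly_over (Domain G) p" "poly_over (Domain G) p'" "poly p y = poly p' y" for p p'
  proof -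
    define r where "r = p - p'"
    have r: "poly_over (Domain G) r" "poly r y = 0"
      using p by (simp_all add: r_def poly_over_diff[OF L])
    have m': "poly_over (Domain G) m" using m by (simp add: is_min_poly_def)
    have "map_poly (emb_fun G) r = map_poly (emb_fun G) (r div m) * map_poly (emb_fun G) m"
      by (subst min_poly_dvd[OF L m r])
        (rule map_poly_hom_mult[OF L s poly_over_div_mod(1)[OF L r(1) m'] m'])
    then have "poly (map_poly (emb_fun G) r) z = 0" using z by simp
    then show ?thesis using map_poly_hom_diff[OF L s p(1,2)] by (simp add: r_def)
  qed
  then show ?thesis by (intro single_valuedI) (metis emb_adjoinE)
qed

lemma partial_emb_adjoin:
  assumes m: "is_min_poly (Domain G) y m" and z: "poly (map_poly (emb_fun G) m) z = 0"
  shows "partial_emb K (emb_adjoin G y z)" "G \<subseteq> emb_adjoin G y z" "(y, z) \<in> emb_adjoin G y z"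
proof -
  note L = partial_emb_subfield and s = ring_hom_on_emb_fun
  have graph: "(poly p y, poly (map_poly (emb_fun G) p) z) \<in> emb_adjoin G y z"
    if "poly_over (Domain G) p" for p
    unfolding emb_adjoin_def by (rule rev_image_eqI[of p]) (use that in simp_all)
  have dom: "Domain (emb_adjoin G y z) = adjoin (Domain G) y"
    unfolding emb_adjoin_def adjoin_def by (simp add: Domain_fst image_image)
  have closed: "(a + c, b + d) \<in> emb_adjoin G y z \<and> (a * c, b * d) \<in> emb_adjoin G y z"
    if ab: "(a, b) \<in> emb_adjoin G y z" and cd: "(c, d) \<in> emb_adjoin G y z" for a b c d
  proof -
    obtain p where "poly_over (Domain G) p" "a = poly p y" "b = poly (map_poly (emb_fun G) p) z"
      using ab by (rule emb_adjoinE)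
    moreover obtain p' where
      "poly_over (Domain G) p'" "c = poly p' y" "d = poly (map_poly (emb_fun G) p') z"
      using cd by (rule emb_adjoinE)
    ultimately show ?thesis
      using graph[OF poly_over_add[OF L]] graph[OF poly_over_mult[OF L]]
      by (simp add: map_poly_hom_add[OF L s] map_poly_hom_mult[OF L s])
  qed
  have const: "(x, emb_fun G x) \<in> emb_adjoin G y z" if "x \<in> Domain G" for x
    using graph[OF poly_over_const[OF L that]] by (simp add: map_poly_hom_const[OF L s])
  show "G \<subseteq> emb_adjoin G y z"
  proof (rule subrelI)
    fix x y' assume "(x, y') \<in> G"
    then show "(x, y') \<in> emb_adjoin G y z" using const[of x] emb_fun_eq[of x y'] by blast
  qed
  moreover have "(1, 1) \<in> G" "Id_on K \<subseteq> G" using G unfolding partial_emb_def by blast+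
  ultimately have "(1, 1) \<in> emb_adjoin G y z" "Id_on K \<subseteq> emb_adjoin G y z" by blast+
  then show "partial_emb K (emb_adjoin G y z)"
    unfolding partial_emb_def dom
    using is_subfield_adjoin[OF L m] emb_adjoin_single_valued[OF m z] by (simp add: closed)
  show "(y, z) \<in> emb_adjoin G y z"
    using graph[OF poly_over_X[OF L]] by (simp add: map_poly_hom_X[OF L s])
qed

end

lemma partial_emb_Union_chain:
  assumes C: "C \<noteq> {}" "\<And>G. G \<in> C \<Longrightarrow> partial_emb K G"
    and chain: "\<And>X Y. X \<in> C \<Longrightarrow> Y \<in> C \<Longrightarrow> X \<subseteq> Y \<or> Y \<subseteq> X"
  shows "partial_emb K (\<Union>C)"
proof -
  have common: "\<exists>G\<in>C. (a, b) \<in> G \<and> (c, d) \<in> G"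
    if ab: "(a, b) \<in> \<Union>C" and cd: "(c, d) \<in> \<Union>C" for a b c d
  proof -
    obtain X Y where "X \<in> C" "Y \<in> C" "(a, b) \<in> X" "(c, d) \<in> Y" using ab cd by blast
    moreover from this(1,2) have "X \<subseteq> Y \<or> Y \<subseteq> X" by (rule chain)
    ultimately show ?thesis by blast
  qed
  have common_Domain: "\<exists>G\<in>C. x \<in> Domain G \<and> x' \<in> Domain G"
    if x: "x \<in> Domain (\<Union>C)" and x': "x' \<in> Domain (\<Union>C)" for x x'
  proof -
    obtain y y' where "(x, y) \<in> \<Union>C" "(x', y') \<in> \<Union>C" using x x' by blast
    from common[OF this] show ?thesis by blast
  qed
  have "is_subfield (Domain (\<Union>C))"
    unfolding is_subfield_def
  proof (intro conjI ballI)
    obtain G where G: "G \<in> C" using C(1) by blast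
    then show "0 \<in> Domain (\<Union>C)" "1 \<in> Domain (\<Union>C)"
      using is_subfieldD(1,2)[OF partial_emb_subfield[OF C(2)[OF G]]] by blast+
  next
    fix x x' assume "x \<in> Domain (\<Union>C)" "x' \<in> Domain (\<Union>C)"
    with common_Domain obtain G where G: "G \<in> C" "x \<in> Domain G" "x' \<in> Domain G" by blast
    then show "x + x' \<in> Domain (\<Union>C)" "x * x' \<in> Domain (\<Union>C)"
      using is_subfieldD(3,4)[OF partial_emb_subfield[OF C(2)[OF G(1)]] G(2,3)] by blast+
  next
    fix x assume "x \<in> Domain (\<Union>C)"
    then obtain G where G: "G \<in> C" "x \<in> Domain G" by blast
    then show "- x \<in> Domain (\<Union>C)" "inverse x \<in> Domain (\<Union>C)"
      using is_subfieldD(5,6)[OF partial_emb_subfield[OF C(2)[OF G(1)]] G(2)] by blast+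
  qed
  moreover have "single_valued (\<Union>C)"
  proof (rule single_valuedI)
    fix x y y' assume "(x, y) \<in> \<Union>C" "(x, y') \<in> \<Union>C"
    with common obtain G where G: "G \<in> C" "(x, y) \<in> G" "(x, y') \<in> G" by blast
    then show "y = y'" using C(2)[OF G(1)] unfolding partial_emb_def single_valued_def by blast
  qed
  moreover have "(a + c, b + d) \<in> \<Union>C \<and> (a * c, b * d) \<in> \<Union>C"
    if ab: "(a, b) \<in> \<Union>C" and cd: "(c, d) \<in> \<Union>C" for a b c d
  proof -
    obtain G where G: "G \<in> C" "(a, b) \<in> G" "(c, d) \<in> G" using common[OF ab cd] by blast
    then have "(a + c, b + d) \<in> G \<and> (a * c, b * d) \<in> G"
      using C(2)[OF G(1)] unfolding partial_emb_def by simp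
    then show ?thesis using G(1) by blast
  qed
  moreover obtain G where "G \<in> C" using C(1) by blast
  then have "(1, 1) \<in> \<Union>C" "Id_on K \<subseteq> \<Union>C"
    using C(2)[OF \<open>G \<in> C\<close>] unfolding partial_emb_def by blast+
  ultimately show ?thesis unfolding partial_emb_def by simp
qed

lemma exists_maximal_partial_emb:
  assumes "partial_emb K G"
  shows "\<exists>M. partial_emb K M \<and> G \<subseteq> M \<and> (\<forall>X. partial_emb K X \<longrightarrow> M \<subseteq> X \<longrightarrow> X = M)"
proof -
  define A where "A = {X. partial_emb K X \<and> G \<subseteq> X}"
  have "\<exists>M\<in>A. \<forall>X\<in>A. M \<subseteq> X \<longrightarrow> X = M"
  proof (rule Zorn_Lemma2, intro ballI)
    fix C assume C: "C \<in> chains A"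
    show "\<exists>U\<in>A. \<forall>X\<in>C. X \<subseteq> U"
    proof (cases "C = {}")
      case True
      then show ?thesis using assms unfolding A_def by blast
    next
      case False
      have CA: "\<And>X. X \<in> C \<Longrightarrow> partial_emb K X \<and> G \<subseteq> X"
        using chainsD2[OF C] unfolding A_def by blast
      then have "partial_emb K (\<Union>C)"
        using partial_emb_Union_chain[OF False _ chainsD[OF C]] by blast
      moreover have "G \<subseteq> \<Union>C" using CA False by blast
      ultimately show ?thesis unfolding A_def by blast
    qed
  qed
  then obtain M where M: "partial_emb K M" "G \<subseteq> M"
    and max: "\<And>X. partial_emb K X \<Longrightarrow> G \<subseteq> X \<Longrightarrow> M \<subseteq> X \<Longrightarrow> X = M"
    unfolding A_def by auto
  then show ?thesis by (meson order_trans)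
qed

lemma maximal_partial_emb_total:
  assumes sc: "is_sep_closure_of K" and M: "partial_emb K M"
    and max: "\<And>X. partial_emb K X \<Longrightarrow> M \<subseteq> X \<Longrightarrow> X = M"
  shows "Domain M = UNIV"
proof -
  note L = partial_emb_subfield[OF M] and s = ring_hom_on_emb_fun[OF M]
  have "y \<in> Domain M" for y
  proof -
    obtain P where P: "separable_poly P" "poly_over K P" "poly P y = 0"
      using sc unfolding is_sep_closure_of_def poly_over_def by blast
    have PL: "poly_over (Domain M) P"
      using P(2) partial_emb_Domain[OF M] unfolding poly_over_def by blast
    have "P \<noteq> 0" using P(1) by (simp add: separable_poly_def)
    then obtain m where m: "is_min_poly (Domain M) y m" using min_poly_exists[OF PL _ P(3)] by blast
    have mL: "poly_over (Domain M) m" using m by (simp add: is_min_poly_def)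
    have "P = map_poly (emb_fun M) P"
      using map_poly_hom_fixed[OF L s _ P(2)] emb_fun_fixes[OF M] by simp
    also have "\<dots> = map_poly (emb_fun M) (P div m * m)" by (subst min_poly_dvd[OF L m PL P(3)]) simp
    also have "\<dots> = map_poly (emb_fun M) m * map_poly (emb_fun M) (P div m)"
      by (simp add: map_poly_hom_mult[OF L s poly_over_div_mod(1)[OF L PL mL] mL])
    finally have "separable_poly (map_poly (emb_fun M) m)"
      using P(1) separable_poly_factor by metis
    moreover have "degree (map_poly (emb_fun M) m) \<ge> 1"
      using degree_map_poly_hom[OF L s mL] min_poly_degree_pos[OF m] by simp
    ultimately obtain z where "poly (map_poly (emb_fun M) m) z = 0"
      using sc unfolding is_sep_closure_of_def by blast
    from partial_emb_adjoin[OF M m this] max show ?thesis by blast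
  qed
  then show ?thesis by blast
qed

text \<open>An embedding fixing K permutes the finitely many roots of each polynomial over K.\<close>
lemma ring_hom_fixing_algebraic_surj:
  assumes s: "ring_hom_on UNIV s" and fixes_K: "\<forall>x\<in>K. s x = x"
    and algebraic: "\<And>x. \<exists>P. poly_over K P \<and> P \<noteq> 0 \<and> poly P x = 0"
  shows "surj s"
proof -
  have "y \<in> range s" for y
  proof -
    obtain P where P: "poly_over K P" "P \<noteq> 0" "poly P y = 0" using algebraic by blast
    define R where "R = {x. poly P x = 0}"
    have "s x \<in> R" if "x \<in> R" for x
      using that ring_hom_on_poly[OF is_subfield_UNIV s, of P x]
        map_poly_hom_fixed[OF is_subfield_UNIV s fixes_K P(1)] ring_hom_on_0[OF is_subfield_UNIV s]
      unfolding R_def poly_over_def by simp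
    then have "s ` R = R"
      using endo_inj_surj[of R s] poly_roots_finite[OF P(2)] ring_hom_on_inj[OF is_subfield_UNIV s]
        inj_on_subset unfolding R_def by blast
    then show ?thesis using P(3) unfolding R_def by blast
  qed
  then show ?thesis by blast
qed

lemma partial_emb_extends_to_galois_group:
  assumes sc: "is_sep_closure_of K" and G: "partial_emb K G"
  shows "\<exists>\<sigma>\<in>galois_group K. \<forall>(a, b)\<in>G. \<sigma> a = b"
proof -
  obtain M where M: "partial_emb K M" "G \<subseteq> M" and max: "\<And>X. partial_emb K X \<Longrightarrow> M \<subseteq> X \<Longrightarrow> X = M"
    using exists_maximal_partial_emb[OF G] by blast
  define \<sigma> where "\<sigma> = emb_fun M"
  have hom: "ring_hom_on UNIV \<sigma>"
    using ring_hom_on_emb_fun[OF M(1)] maximal_partial_emb_total[OF sc M(1) max] by (simp add: \<sigma>_def)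
  have fixes_K: "\<forall>x\<in>K. \<sigma> x = x" using emb_fun_fixes[OF M(1)] by (simp add: \<sigma>_def)
  have "surj \<sigma>"
  proof (rule ring_hom_fixing_algebraic_surj[OF hom fixes_K])
    fix x
    obtain P where "separable_poly P" "poly_over K P" "poly P x = 0"
      using sc unfolding is_sep_closure_of_def poly_over_def by blast
    then show "\<exists>P. poly_over K P \<and> P \<noteq> 0 \<and> poly P x = 0" by (auto simp: separable_poly_def)
  qed
  moreover have "inj \<sigma>" using ring_hom_on_inj[OF is_subfield_UNIV hom] .
  moreover have "is_ring_hom \<sigma>" using hom by (simp add: ring_hom_on_def is_ring_hom_def)
  ultimately have "\<sigma> \<in> galois_group K" using fixes_K by (simp add: galois_group_def bij_def)
  moreover have "\<forall>(a, b)\<in>G. \<sigma> a = b" using M emb_fun_eq[OF M(1)] by (auto simp: \<sigma>_def)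
  ultimately show ?thesis by blast
qed

definition irreducible_over :: "'a::field set \<Rightarrow> 'a poly \<Rightarrow> bool" where
  "irreducible_over K p \<longleftrightarrow>
     (\<forall>a b. poly_over K a \<longrightarrow> poly_over K b \<longrightarrow> p = a * b \<longrightarrow> degree a = 0 \<or> degree b = 0)"

lemma irreducible_overD:
  "irreducible_over K p \<Longrightarrow> poly_over K a \<Longrightarrow> poly_over K b \<Longrightarrow> p = a * b \<Longrightarrow>
    degree a = 0 \<or> degree b = 0"
  by (simp add: irreducible_over_def)

theorem galois_group_transitive_on_roots:
  assumes K: "is_subfield K" and sc: "is_sep_closure_of K"
    and F: "poly_over K F" "F \<noteq> 0" "irreducible_over K F" and roots: "poly F w = 0" "poly F u = 0"
  shows "\<exists>\<sigma>\<in>galois_group K. \<sigma> w = u"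
proof -
  obtain m where m: "is_min_poly K w m" using min_poly_exists[OF F(1,2) roots(1)] by blast
  have mK: "poly_over K m" using m by (simp add: is_min_poly_def)
  have F_eq: "F = F div m * m" by (rule min_poly_dvd[OF K m F(1) roots(1)])
  have "degree (F div m) = 0 \<or> degree m = 0"
    by (rule irreducible_overD[OF F(3) poly_over_div_mod(1)[OF K F(1) mK] mK F_eq])
  then have "degree (F div m) = 0" using min_poly_degree_pos[OF m] by simp
  then obtain c where "F div m = [:c:]" by (metis degree_0_id)
  then have "F = smult c m" by (subst F_eq) simp
  then have "poly F u = c * poly m u" "c \<noteq> 0" using F(2) by auto
  then have "poly m u = 0" using roots(2) by simp
  have Id: "partial_emb K (Id_on K)" by (rule partial_emb_Id_on[OF K])
  have "map_poly (emb_fun (Id_on K)) m = m"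
    using map_poly_hom_fixed[OF partial_emb_subfield[OF Id] ring_hom_on_emb_fun[OF Id] _ mK]
      emb_fun_fixes[OF Id] by blast
  with \<open>poly m u = 0\<close> have "poly (map_poly (emb_fun (Id_on K)) m) u = 0" by simp
  with m have "partial_emb K (emb_adjoin (Id_on K) w u)" "(w, u) \<in> emb_adjoin (Id_on K) w u"
    using partial_emb_adjoin[OF Id] by simp_all
  with partial_emb_extends_to_galois_group[OF sc] show ?thesis by fastforce
qed

section \<open>Eisenstein's criterion for a discrete valuation\<close>

context
  fixes K :: "'a::field set" and v :: "'a \<Rightarrow> int"
  assumes K: "is_subfield K" and v: "is_valuation_on K v"
begin

lemma valuation_mult: "x \<in> K \<Longrightarrow> y \<in> K \<Longrightarrow> x \<noteq> 0 \<Longrightarrow> y \<noteq> 0 \<Longrightarrow> v (x * y) = v x + v y"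
  using v unfolding is_valuation_on_def by blast

lemma valuation_add:
  "x \<in> K \<Longrightarrow> y \<in> K \<Longrightarrow> x \<noteq> 0 \<Longrightarrow> y \<noteq> 0 \<Longrightarrow> x + y \<noteq> 0 \<Longrightarrow> min (v x) (v y) \<le> v (x + y)"
  using v unfolding is_valuation_on_def by blast

lemma valuation_uminus: "x \<in> K \<Longrightarrow> x \<noteq> 0 \<Longrightarrow> v (- x) = v x"
proof -
  have "v 1 = 0" using valuation_mult[of 1 1] is_subfieldD(2)[OF K] by simp
  then have "v (- 1) = 0" using valuation_mult[of "- 1" "- 1"] is_subfieldD(2,5)[OF K] by simp
  then show "x \<in> K \<Longrightarrow> x \<noteq> 0 \<Longrightarrow> v (- x) = v x"
    using valuation_mult[of "- 1" x] is_subfieldD(2,5)[OF K] by simp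
qed

lemma val_ge_add: "x \<in> K \<Longrightarrow> y \<in> K \<Longrightarrow> val_ge v x n \<Longrightarrow> val_ge v y n \<Longrightarrow> val_ge v (x + y) n"
  unfolding val_ge_def using valuation_add[of x y] by fastforce

lemma val_ge_mult:
  "x \<in> K \<Longrightarrow> y \<in> K \<Longrightarrow> val_ge v x n \<Longrightarrow> val_ge v y n' \<Longrightarrow> val_ge v (x * y) (n + n')"
  unfolding val_ge_def by (cases "x = 0 \<or> y = 0") (auto simp: valuation_mult)

lemma val_ge_sum:
  "(\<And>i. i \<in> S \<Longrightarrow> f i \<in> K) \<Longrightarrow> (\<And>i. i \<in> S \<Longrightarrow> val_ge v (f i) n) \<Longrightarrow> val_ge v (sum f S) n"
  by (induction S rule: infinite_finite_induct)
    (simp_all add: val_ge_def[of v 0] val_ge_add subfield_sum[OF K])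

lemma valuation_add_strict:
  assumes "x \<in> K" "y \<in> K" "x \<noteq> 0" "val_ge v y (v x + 1)"
  shows "x + y \<noteq> 0 \<and> v (x + y) = v x"
proof (cases "y = 0")
  case False
  then have less: "v x < v y" using assms(4) unfolding val_ge_def by simp
  have ne: "x + y \<noteq> 0"
    using less valuation_uminus[OF assms(1,3)] by (metis add_eq_0_iff less_irrefl)
  have "v x \<le> v (x + y)" using valuation_add[OF assms(1,2,3) False ne] less by simp
  moreover have "min (v (x + y)) (v (- y)) \<le> v x"
    using valuation_add[OF is_subfieldD(3)[OF K assms(1,2)] is_subfieldD(5)[OF K assms(2)] ne]
      False assms(3) by simp
  ultimately show ?thesis using ne valuation_uminus[OF assms(2) False] less by linarith
qed (use assms in simp)

lemma exists_min_valuation_coeff: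
  assumes "poly_over K p" "p \<noteq> 0"
  obtains i n where "coeff p i \<noteq> 0" "v (coeff p i) = n" "i \<le> degree p"
    "\<And>j. val_ge v (coeff p j) n" "\<And>j. j < i \<Longrightarrow> val_ge v (coeff p j) (n + 1)"
proof -
  define S where "S = {i. i \<le> degree p \<and> coeff p i \<noteq> 0}"
  have "finite S" "degree p \<in> S" using assms(2) by (simp_all add: S_def)
  define n where "n = Min ((\<lambda>i. v (coeff p i)) ` S)"
  have "n \<in> (\<lambda>i. v (coeff p i)) ` S" unfolding n_def using \<open>finite S\<close> \<open>degree p \<in> S\<close> by (intro Min_in) auto
  then have ex: "\<exists>i. coeff p i \<noteq> 0 \<and> v (coeff p i) = n" unfolding S_def by auto
  have ge: "val_ge v (coeff p j) n" for j
  proof (cases "coeff p j = 0")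
    case False
    then have "j \<in> S" using le_degree by (simp add: S_def)
    then show ?thesis using \<open>finite S\<close> by (simp add: val_ge_def n_def)
  qed (simp add: val_ge_def)
  define i where "i = (LEAST i. coeff p i \<noteq> 0 \<and> v (coeff p i) = n)"
  have i: "coeff p i \<noteq> 0" "v (coeff p i) = n" unfolding i_def using LeastI_ex[OF ex] by auto
  have "val_ge v (coeff p j) (n + 1)" if "j < i" for j
    using not_less_Least[OF that[unfolded i_def]] ge[of j] unfolding val_ge_def by auto
  with i ge show thesis using le_degree that by blast
qed

lemma coeff_mult_at_min_valuation:
  assumes r: "poly_over K r" and s: "poly_over K s"
    and A: "coeff r i \<noteq> 0" "v (coeff r i) = \<alpha>"
      "\<And>k. val_ge v (coeff r k) \<alpha>" "\<And>k. k < i \<Longrightarrow> val_ge v (coeff r k) (\<alpha> + 1)"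
    and B: "coeff s j \<noteq> 0" "v (coeff s j) = \<beta>"
      "\<And>k. val_ge v (coeff s k) \<beta>" "\<And>k. k < j \<Longrightarrow> val_ge v (coeff s k) (\<beta> + 1)"
  shows "coeff (r * s) (i + j) \<noteq> 0" "v (coeff (r * s) (i + j)) = \<alpha> + \<beta>"
proof -
  have rK: "coeff r k \<in> K" and sK: "coeff s k \<in> K" for k using r s by (auto simp: poly_over_def)
  have rest: "val_ge v (\<Sum>k\<in>{..i + j} - {i}. coeff r k * coeff s (i + j - k)) (\<alpha> + \<beta> + 1)"
  proof (intro val_ge_sum is_subfieldD(4)[OF K] rK sK)
    fix k assume "k \<in> {..i + j} - {i}"
    then consider "k < i" | "i < k" "i + j - k < j" by fastforce
    then show "val_ge v (coeff r k * coeff s (i + j - k)) (\<alpha> + \<beta> + 1)"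
    proof cases
      case 1
      then show ?thesis using val_ge_mult[OF rK sK A(4)[OF 1] B(3)] by (simp add: algebra_simps)
    next
      case 2
      then show ?thesis using val_ge_mult[OF rK sK A(3) B(4)[OF 2(2)]] by (simp add: algebra_simps)
    qed
  qed
  have prod: "coeff r i * coeff s j \<in> K" "coeff r i * coeff s j \<noteq> 0"
    "v (coeff r i * coeff s j) = \<alpha> + \<beta>"
    using valuation_mult[OF rK sK A(1) B(1)] A(1,2) B(1,2) is_subfieldD(4)[OF K rK sK] by simp_all
  have "coeff (r * s) (i + j) =
      coeff r i * coeff s j + (\<Sum>k\<in>{..i + j} - {i}. coeff r k * coeff s (i + j - k))"
    unfolding coeff_mult by (subst sum.remove[of _ i]) auto
  also have "\<dots> \<noteq> 0 \<and> v \<dots> = \<alpha> + \<beta>"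
    using valuation_add_strict[OF prod(1) _ prod(2)] rest prod(3)
    by (simp add: subfield_sum[OF K] is_subfieldD(4)[OF K] rK sK)
  finally show "coeff (r * s) (i + j) \<noteq> 0" "v (coeff (r * s) (i + j)) = \<alpha> + \<beta>" by simp_all
qed

text \<open>Let r and s attain their minimal valuations first at i and j. The coefficient of r s at
  i + j has the least possible valuation, which is at most 0 because of the unit leading
  coefficient; hence i + j = deg (r s), and the constant coefficient would have valuation at
  least 2 if both factors were nonconstant.\<close>
theorem eisenstein_irreducible_over:
  assumes p: "poly_over K p" "coeff p 0 \<noteq> 0" "v (coeff p 0) = 1"
    "\<And>k. 0 < k \<Longrightarrow> k < degree p \<Longrightarrow> val_ge v (coeff p k) 1" "v (lead_coeff p) = 0"
  shows "irreducible_over K p"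
  unfolding irreducible_over_def
proof (intro allI impI)
  fix r s assume r: "poly_over K r" and s: "poly_over K s" and p_eq: "p = r * s"
  have "r \<noteq> 0" "s \<noteq> 0" using p(2) unfolding p_eq by auto
  obtain i \<alpha> where A: "coeff r i \<noteq> 0" "v (coeff r i) = \<alpha>" "i \<le> degree r"
    "\<And>k. val_ge v (coeff r k) \<alpha>" "\<And>k. k < i \<Longrightarrow> val_ge v (coeff r k) (\<alpha> + 1)"
    using exists_min_valuation_coeff[OF r \<open>r \<noteq> 0\<close>] by blast
  obtain j \<beta> where B: "coeff s j \<noteq> 0" "v (coeff s j) = \<beta>" "j \<le> degree s"
    "\<And>k. val_ge v (coeff s k) \<beta>" "\<And>k. k < j \<Longrightarrow> val_ge v (coeff s k) (\<beta> + 1)"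
    using exists_min_valuation_coeff[OF s \<open>s \<noteq> 0\<close>] by blast
  have rK: "coeff r k \<in> K" and sK: "coeff s k \<in> K" for k using r s by (auto simp: poly_over_def)
  have "val_ge v (coeff p n) (\<alpha> + \<beta>)" for n
    unfolding p_eq coeff_mult by (intro val_ge_sum val_ge_mult rK sK A(4) B(4) is_subfieldD(4)[OF K])
  from this[of "degree p"] have "\<alpha> + \<beta> \<le> 0"
    using p(5) \<open>r \<noteq> 0\<close> \<open>s \<noteq> 0\<close> by (simp add: val_ge_def p_eq)
  have min_coeff: "coeff p (i + j) \<noteq> 0" "v (coeff p (i + j)) = \<alpha> + \<beta>"
    using coeff_mult_at_min_valuation[OF r s A(1,2,4,5) B(1,2,4,5)] unfolding p_eq by blast+
  have "i + j = degree p"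
  proof (rule ccontr)
    assume "i + j \<noteq> degree p"
    moreover have "i + j \<le> degree p"
      using A(3) B(3) \<open>r \<noteq> 0\<close> \<open>s \<noteq> 0\<close> by (simp add: p_eq degree_mult_eq)
    ultimately have "1 \<le> v (coeff p (i + j))"
      using p(3) p(4)[of "i + j"] min_coeff(1) by (cases "i + j = 0") (auto simp: val_ge_def)
    then show False using min_coeff(2) \<open>\<alpha> + \<beta> \<le> 0\<close> by simp
  qed
  then have "i = degree r" "j = degree s"
    using A(3) B(3) \<open>r \<noteq> 0\<close> \<open>s \<noteq> 0\<close> by (auto simp: p_eq degree_mult_eq)
  show "degree r = 0 \<or> degree s = 0"
  proof (rule ccontr)
    assume "\<not> (degree r = 0 \<or> degree s = 0)"
    then have "0 < i" "0 < j" using \<open>i = degree r\<close> \<open>j = degree s\<close> by auto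
    then have "val_ge v (coeff r 0 * coeff s 0) ((\<alpha> + 1) + (\<beta> + 1))"
      by (intro val_ge_mult rK sK A(5) B(5))
    moreover have "\<alpha> + \<beta> = 0" using min_coeff(2) \<open>i + j = degree p\<close> p(5) by simp
    ultimately show False using p(2,3) by (simp add: p_eq coeff_mult val_ge_def)
  qed
qed

end

lemma skc_skew_add: "skc (skew_add P Q) n = skc P n + skc Q n"
  unfolding skew_add_def skc_def by (auto simp: nth_map_upt)

lemma skc_skew_mult:
  assumes "q > 0"
  shows "skc (skew_mult q P Q) n = (\<Sum>i\<le>n. skc P i * skc Q (n - i) ^ (q ^ i))"
proof (cases "n < length P + length Q")
  case False
  then have zero: "skc P i * skc Q (n - i) ^ (q ^ i) = 0" for i
    using assms by (cases "i < length P") (auto simp: skc_def)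
  have "(\<Sum>i\<le>n. skc P i * skc Q (n - i) ^ (q ^ i)) = 0" by (simp add: zero)
  moreover have "skc (skew_mult q P Q) n = 0" using False by (simp add: skc_def skew_mult_def)
  ultimately show ?thesis by simp
qed (simp add: skew_mult_def skc_def[of "map _ _"] nth_map_upt)

lemma skc_Nil [simp]: "skc [] n = 0"
  by (simp add: skc_def)

lemma drinfeld_phi_0 [simp]: "drinfeld_phi q \<iota> phiT 0 = []"
  by (simp add: drinfeld_phi_def)

lemma skc_drinfeld_phi_pCons:
  assumes "q > 0" "pCons c a \<noteq> 0"
  shows "skc (drinfeld_phi q \<iota> phiT (pCons c a)) n = (if n = 0 then \<iota> [:c:] else 0) +
    (\<Sum>i\<le>n. skc phiT i * skc (drinfeld_phi q \<iota> phiT a) (n - i) ^ (q ^ i))"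
proof -
  have "coeffs (pCons c a) = c # coeffs a" using assms(2) by (auto simp: cCons_def)
  then show ?thesis
    by (simp add: drinfeld_phi_def skc_skew_add skc_skew_mult[OF assms(1)] skc_def[of "[_]"])
qed

lemma skc_drinfeld_phi_0:
  assumes "q > 0" "is_ring_hom \<iota>" "skc phiT 0 = \<iota> [:0, 1:]"
  shows "skc (drinfeld_phi q \<iota> phiT a) 0 = \<iota> a"
proof (induction a)
  case 0
  then show ?case using is_ring_hom_0[OF assms(2)] by simp
next
  case (pCons c a)
  have "pCons c a = [:c:] + [:0, 1:] * a" by simp
  then have "\<iota> (pCons c a) = \<iota> [:c:] + \<iota> [:0, 1:] * \<iota> a"
    using assms(2) unfolding is_ring_hom_def by metis
  with pCons show ?case by (simp add: skc_drinfeld_phi_pCons[OF assms(1)] assms(3))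
qed

lemma skc_drinfeld_phi_in_subfield:
  assumes K: "is_subfield K" and "q > 0" "\<And>c. \<iota> [:c:] \<in> K" "\<And>i. skc phiT i \<in> K"
  shows "skc (drinfeld_phi q \<iota> phiT a) n \<in> K"
proof (induction a arbitrary: n)
  case 0
  then show ?case using is_subfieldD(1)[OF K] by simp
next
  case (pCons c a)
  then show ?case
    using assms is_subfieldD(1,3,4)[OF K]
    by (simp add: skc_drinfeld_phi_pCons subfield_sum[OF K] subfield_power[OF K])
qed

lemma skc_drinfeld_phi_eq_0:
  assumes "q > 0" and rank: "\<And>i. r < i \<Longrightarrow> skc phiT i = 0"
  shows "r * degree a < n \<Longrightarrow> skc (drinfeld_phi q \<iota> phiT a) n = 0"
proof (induction a arbitrary: n)
  case 0
  then show ?case by simp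
next
  case (pCons c a)
  have zero: "skc phiT i * skc (drinfeld_phi q \<iota> phiT a) (n - i) ^ (q ^ i) = 0" for i
  proof (cases "r < i \<or> a = 0")
    case False
    then have "r * degree a + r < n" using pCons.prems by (simp add: degree_pCons_eq)
    then have "r * degree a < n - i" using False by (simp add: less_diff_conv)
    then show ?thesis using pCons.IH assms(1) by simp
  qed (use rank assms(1) in auto)
  have "n \<noteq> 0" using pCons.prems by simp
  then show ?case using pCons.hyps by (simp add: skc_drinfeld_phi_pCons[OF assms(1)] zero)
qed

lemma skc_drinfeld_phi_rank_two:
  assumes K: "is_subfield K" and hom: "is_ring_hom \<iota>" and "range \<iota> \<subseteq> K" "g \<in> K" "\<Delta> \<in> K" "0 < q"
  shows "skc (drinfeld_phi q \<iota> [\<iota> [:0, 1:], g, \<Delta>] a) 0 = \<iota> a"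
    and "2 * degree a < n \<Longrightarrow> skc (drinfeld_phi q \<iota> [\<iota> [:0, 1:], g, \<Delta>] a) n = 0"
    and "skc (drinfeld_phi q \<iota> [\<iota> [:0, 1:], g, \<Delta>] a) n \<in> K"
proof -
  have phi: "skc [\<iota> [:0, 1:], g, \<Delta>] 0 = \<iota> [:0, 1:]" "\<And>i. 2 < i \<Longrightarrow> skc [\<iota> [:0, 1:], g, \<Delta>] i = 0"
    "\<And>i. skc [\<iota> [:0, 1:], g, \<Delta>] i \<in> K"
    using assms(3-5) is_subfieldD(1)[OF K] by (auto simp: skc_def nth_Cons split: nat.split)
  show "skc (drinfeld_phi q \<iota> [\<iota> [:0, 1:], g, \<Delta>] a) 0 = \<iota> a"
    by (rule skc_drinfeld_phi_0[OF assms(6) hom phi(1)])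
  show "2 * degree a < n \<Longrightarrow> skc (drinfeld_phi q \<iota> [\<iota> [:0, 1:], g, \<Delta>] a) n = 0"
    by (rule skc_drinfeld_phi_eq_0[OF assms(6) phi(2)])
  show "skc (drinfeld_phi q \<iota> [\<iota> [:0, 1:], g, \<Delta>] a) n \<in> K"
    using assms(3) by (intro skc_drinfeld_phi_in_subfield[OF K assms(6) _ phi(3)]) auto
qed

section \<open>The nonzero torsion points as roots of an Eisenstein polynomial\<close>

definition additive_poly_div_X :: "nat \<Rightarrow> (nat \<Rightarrow> 'a::field) \<Rightarrow> nat \<Rightarrow> 'a poly" where
  "additive_poly_div_X q a D = (\<Sum>i\<le>D. monom (a i) (q ^ i - 1))"

context
  fixes q :: nat and a :: "nat \<Rightarrow> 'a::field" and D :: nat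
  assumes q: "2 \<le> q"
begin

lemma coeff_additive_poly_div_X:
  "coeff (additive_poly_div_X q a D) k = (\<Sum>i\<le>D. if q ^ i - 1 = k then a i else 0)"
  unfolding additive_poly_div_X_def coeff_sum by simp

lemma coeff_additive_poly_div_X_pow: "i \<le> D \<Longrightarrow> coeff (additive_poly_div_X q a D) (q ^ i - 1) = a i"
proof -
  have pos: "1 \<le> q ^ k" for k using q by simp
  have "q ^ j - 1 = q ^ i - 1 \<longleftrightarrow> q ^ j = q ^ i" for j using pos[of j] pos[of i] by linarith
  then have "q ^ j - 1 = q ^ i - 1 \<longleftrightarrow> j = i" for j using q by simp
  then show "i \<le> D \<Longrightarrow> ?thesis" by (simp add: coeff_additive_poly_div_X)
qed

lemma coeff_additive_poly_div_X_eq_0: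
  "(\<And>i. i \<le> D \<Longrightarrow> k \<noteq> q ^ i - 1) \<Longrightarrow> coeff (additive_poly_div_X q a D) k = 0"
  unfolding coeff_additive_poly_div_X by (intro sum.neutral) auto

lemma degree_additive_poly_div_X:
  assumes "a D \<noteq> 0"
  shows "degree (additive_poly_div_X q a D) = q ^ D - 1"
proof (rule antisym)
  show "degree (additive_poly_div_X q a D) \<le> q ^ D - 1"
  proof (rule degree_le, intro allI impI coeff_additive_poly_div_X_eq_0)
    fix k i assume "q ^ D - 1 < k" "i \<le> D"
    moreover have "q ^ i \<le> q ^ D" using q \<open>i \<le> D\<close> by (simp add: power_increasing)
    ultimately show "k \<noteq> q ^ i - 1" by linarith
  qed
  show "q ^ D - 1 \<le> degree (additive_poly_div_X q a D)"
    using assms coeff_additive_poly_div_X_pow[of D] by (simp add: le_degree)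
qed

lemma degree_additive_poly_div_X_pos:
  assumes "a D \<noteq> 0" "0 < D"
  shows "0 < degree (additive_poly_div_X q a D)"
proof -
  have "1 < q ^ D" using q assms(2) by (intro one_less_power) auto
  then show ?thesis by (simp add: degree_additive_poly_div_X[OF assms(1)])
qed

lemma poly_additive_poly_div_X: "x * poly (additive_poly_div_X q a D) x = (\<Sum>i\<le>D. a i * x ^ q ^ i)"
proof -
  have "x * poly (additive_poly_div_X q a D) x = (\<Sum>i\<le>D. a i * (x * x ^ (q ^ i - 1)))"
    by (simp add: additive_poly_div_X_def poly_sum poly_monom sum_distrib_left mult.left_commute)
  also have "\<dots> = (\<Sum>i\<le>D. a i * x ^ q ^ i)"
    using q by (simp flip: power_Suc)
  finally show ?thesis .
qed

lemma pderiv_X_mult_additive_poly_div_X: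
  assumes char: "of_nat q = (0 :: 'a)"
  shows "pderiv ([:0, 1:] * additive_poly_div_X q a D) = [:a 0:]"
proof -
  define F where "F = additive_poly_div_X q a D"
  have "of_nat (Suc n) * coeff F n = (if n = 0 then a 0 else 0)" for n
  proof (cases "\<exists>i\<le>D. n = q ^ i - 1")
    case True
    then obtain i where i: "i \<le> D" "n = q ^ i - 1" by blast
    then have "Suc n = q ^ i" using q by simp
    show ?thesis
    proof (cases "i = 0")
      case True
      then show ?thesis using i coeff_additive_poly_div_X_pow[of 0] by (simp add: F_def)
    next
      case False
      then have "of_nat (Suc n) = (0 :: 'a)"
        using char \<open>Suc n = q ^ i\<close> by (metis of_nat_power power_0_left)
      moreover have "q \<le> q ^ i" using q False by (simp add: self_le_power)
      then have "n \<noteq> 0" using q \<open>Suc n = q ^ i\<close> by linarith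
      ultimately show ?thesis by simp
    qed
  next
    case False
    moreover from this have "n \<noteq> 0" by force
    ultimately show ?thesis using coeff_additive_poly_div_X_eq_0 by (auto simp: F_def)
  qed
  then show ?thesis
    unfolding F_def[symmetric] by (intro poly_eqI) (simp add: coeff_pderiv coeff_pCons split: nat.split)
qed

lemma separable_additive_poly_div_X:
  assumes char: "of_nat q = (0 :: 'a)" and "a 0 \<noteq> 0"
  shows "separable_poly (additive_poly_div_X q a D)"
proof -
  define F where "F = additive_poly_div_X q a D"
  have "F \<noteq> 0" using assms coeff_additive_poly_div_X_pow[of 0] by (auto simp: F_def)
  moreover have "is_unit c" if "c dvd F" "c dvd pderiv F" for c
  proof -
    have "c dvd [:0, 1:] * pderiv F + F * pderiv [:0, 1:]"
      using that by (intro dvd_add dvd_mult dvd_mult2)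
    also have "[:0, 1:] * pderiv F + F * pderiv [:0, 1:] = [:a 0:]"
      using pderiv_X_mult_additive_poly_div_X[OF char] by (metis F_def pderiv_mult)
    finally have "c dvd [:a 0:]" .
    then show ?thesis using assms(2) by (metis dvd_unit_imp_unit is_unit_const_poly_iff dvd_field_iff)
  qed
  ultimately show ?thesis by (auto simp: separable_poly_def F_def intro: coprimeI)
qed

lemma poly_over_additive_poly_div_X:
  assumes K: "is_subfield K" and "\<And>i. a i \<in> K"
  shows "poly_over K (additive_poly_div_X q a D)"
  using assms(2) is_subfieldD(1)[OF K]
  unfolding poly_over_def coeff_additive_poly_div_X by (intro allI subfield_sum[OF K]) auto

lemma irreducible_over_additive_poly_div_X:
  assumes K: "is_subfield K" and v: "is_valuation_on K v" and "\<And>i. a i \<in> K"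
    and "a 0 \<noteq> 0" "v (a 0) = 1" "\<And>i. 0 < i \<Longrightarrow> i < D \<Longrightarrow> val_ge v (a i) 1"
    and "a D \<noteq> 0" "v (a D) = 0"
  shows "irreducible_over K (additive_poly_div_X q a D)"
proof (rule eisenstein_irreducible_over[OF K v])
  let ?F = "additive_poly_div_X q a D"
  show "poly_over K ?F" by (rule poly_over_additive_poly_div_X[OF K assms(3)])
  show "coeff ?F 0 \<noteq> 0" "v (coeff ?F 0) = 1" "v (lead_coeff ?F) = 0"
    using coeff_additive_poly_div_X_pow[of 0] coeff_additive_poly_div_X_pow[of D] assms(4,5,8)
    by (simp_all add: degree_additive_poly_div_X[OF assms(7)])
  show "val_ge v (coeff ?F k) 1" if "0 < k" "k < degree ?F" for k
  proof (cases "\<exists>i\<le>D. k = q ^ i - 1")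
    case True
    then obtain i where i: "i \<le> D" "k = q ^ i - 1" by blast
    moreover have "i \<noteq> 0" using that(1) i(2) by (cases "i = 0") auto
    moreover have "i \<noteq> D" using that(2) i(2) degree_additive_poly_div_X[OF assms(7)] by auto
    ultimately have "0 < i" "i < D" by simp_all
    then show ?thesis using assms(6) coeff_additive_poly_div_X_pow[OF i(1)] i(2) by simp
  qed (simp add: coeff_additive_poly_div_X_eq_0 val_ge_def)
qed

end

section \<open>Irreducibility of the torsion module\<close>

lemma of_nat_card_eq_0: "of_nat (card (UNIV :: 'a set)) = (0 :: 'a::{finite,ring_1})"
proof -
  have "(\<Sum>x\<in>UNIV. x + 1) = (\<Sum>x\<in>UNIV. x :: 'a)"
    by (rule sum.reindex_bij_witness[of _ "\<lambda>x. x - 1" "\<lambda>x. x + 1"]) auto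
  then show ?thesis by (simp add: sum.distrib)
qed

lemma is_ring_hom_of_nat_card:
  assumes "is_ring_hom (\<iota> :: 'k::{finite,field} poly \<Rightarrow> 'b::field)"
  shows "of_nat (card (UNIV :: 'k set)) = (0 :: 'b)"
proof -
  have "(of_nat (card (UNIV :: 'k set)) :: 'k poly) = 0" by (simp add: of_nat_poly of_nat_card_eq_0)
  then show ?thesis using is_ring_hom_of_nat[OF assms] is_ring_hom_0[OF assms] by metis
qed

lemma card_field_ge_2: "2 \<le> card (UNIV :: 'k::{finite,field} set)"
proof -
  have "card {0 :: 'k, 1} \<le> card (UNIV :: 'k set)" by (rule card_mono) auto
  then show ?thesis by simp
qed

lemma is_completion_at_uniformizer:
  assumes "irreducible f" "is_completion_at f \<iota> K v"
  shows "\<iota> f \<noteq> 0" "v (\<iota> f) = 1"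
proof -
  have f: "f \<noteq> 0" "\<not> is_unit f" using assms(1) by (auto simp: irreducible_def)
  have "inj \<iota>" "is_ring_hom \<iota>" and v: "\<And>a. a \<noteq> 0 \<Longrightarrow> v (\<iota> a) = int (multiplicity f a)"
    using assms(2) unfolding is_completion_at_def by blast+
  then show "\<iota> f \<noteq> 0" using f(1) is_ring_hom_0 by (metis injD)
  show "v (\<iota> f) = 1" using v[OF f(1)] multiplicity_self[OF f] by simp
qed

lemma skew_eval_eq_additive_poly_div_X:
  assumes "2 \<le> q" "\<And>i. D < i \<Longrightarrow> skc P i = 0"
  shows "skew_eval q P x = x * poly (additive_poly_div_X q (skc P) D) x"
proof -
  have "skew_eval q P x = (\<Sum>i<max (length P) (Suc D). skc P i * x ^ q ^ i)"
    unfolding skew_eval_def by (rule sum.mono_neutral_left) (auto simp: skc_def)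
  also have "\<dots> = (\<Sum>i\<le>D. skc P i * x ^ q ^ i)"
    using assms(2) by (intro sum.mono_neutral_right) auto
  finally show ?thesis by (simp add: poly_additive_poly_div_X[OF assms(1)])
qed

lemma torsion_eq_roots:
  assumes "2 \<le> q" "\<And>i. D < i \<Longrightarrow> skc (drinfeld_phi q \<iota> phiT f) i = 0"
    "skc (drinfeld_phi q \<iota> phiT f) 0 \<noteq> 0"
  shows "torsion q \<iota> phiT f - {0} =
    {x. poly (additive_poly_div_X q (skc (drinfeld_phi q \<iota> phiT f)) D) x = 0}"
proof -
  have "poly (additive_poly_div_X q (skc (drinfeld_phi q \<iota> phiT f)) D) 0 \<noteq> 0"
    using coeff_additive_poly_div_X_pow[OF assms(1), where i = 0 and a = "skc (drinfeld_phi q \<iota> phiT f)"]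
      assms(3) by (simp add: poly_0_coeff_0)
  then show ?thesis
    using skew_eval_eq_additive_poly_div_X[OF assms(1,2)] unfolding torsion_def by auto
qed

lemma irreducible_galois_module_if_transitive:
  assumes "U \<noteq> {0}" and transitive: "\<And>w u. w \<in> U - {0} \<Longrightarrow> u \<in> U - {0} \<Longrightarrow> \<exists>\<sigma>\<in>G. \<sigma> w = u"
  shows "irreducible_galois_module q \<iota> phiT G U"
  unfolding irreducible_galois_module_def
proof (intro conjI allI impI assms(1))
  fix W assume W: "is_phi_submodule q \<iota> phiT U W" and stable: "\<forall>\<sigma>\<in>G. \<sigma> ` W \<subseteq> W"
  have "U \<subseteq> W" if "w \<in> W" "w \<noteq> 0" for w
    using W that transitive stable unfolding is_phi_submodule_def by blast
  then show "W = {0} \<or> W = U" using W unfolding is_phi_submodule_def by blast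
qed

lemma irreducible_galois_module_if_roots:
  assumes K: "is_subfield K" and sc: "is_sep_closure_of K"
    and F: "poly_over K F" "irreducible_over K F" "separable_poly F" "0 < degree F"
    and U: "U - {0} = {x. poly F x = 0}"
  shows "irreducible_galois_module q \<iota> phiT (galois_group K) U"
proof (rule irreducible_galois_module_if_transitive)
  obtain x where "poly F x = 0" using sc F(3,4) unfolding is_sep_closure_of_def by force
  then show "U \<noteq> {0}" using U by blast
  have "F \<noteq> 0" using F(3) by (simp add: separable_poly_def)
  then show "\<exists>\<sigma>\<in>galois_group K. \<sigma> w = u" if "w \<in> U - {0}" "u \<in> U - {0}" for w u
    using galois_group_transitive_on_roots[OF K sc F(1) _ F(2)] that U by blast
qed

theorem lemma8p4:
  fixes f :: "'k::{finite,field_gcd} poly"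
    and \<iota> :: "'k poly \<Rightarrow> 'b::field"
    and K :: "'b set" and v :: "'b \<Rightarrow> int"
    and g \<Delta> :: 'b
  assumes "irreducible f"
    and "is_completion_at f \<iota> K v"
    and "is_sep_closure_of K"
    and "g \<in> K" and "val_ge v g 0"
    and "\<Delta> \<in> K" and "\<Delta> \<noteq> 0" and "v \<Delta> = 0"
    and "\<forall>i < 2 * degree f.
           val_ge v (skc (drinfeld_phi (card (UNIV :: 'k set)) \<iota> [\<iota> [:0, 1:], g, \<Delta>] f) i) 1"
    and "skc (drinfeld_phi (card (UNIV :: 'k set)) \<iota> [\<iota> [:0, 1:], g, \<Delta>] f) (2 * degree f) \<noteq> 0"
    and "v (skc (drinfeld_phi (card (UNIV :: 'k set)) \<iota> [\<iota> [:0, 1:], g, \<Delta>] f) (2 * degree f)) = 0"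
  shows "irreducible_galois_module (card (UNIV :: 'k set)) \<iota> [\<iota> [:0, 1:], g, \<Delta>] (galois_group K)
           (torsion (card (UNIV :: 'k set)) \<iota> [\<iota> [:0, 1:], g, \<Delta>] f)"
proof -
  define q where "q = card (UNIV :: 'k set)"
  define phi where "phi = [\<iota> [:0, 1:], g, \<Delta>]"
  define a where "a = skc (drinfeld_phi q \<iota> phi f)"
  define F where "F = additive_poly_div_X q a (2 * degree f)"
  have K: "is_subfield K" and v: "is_valuation_on K v" and hom: "is_ring_hom \<iota>" and "range \<iota> \<subseteq> K"
    using assms(2) unfolding is_completion_at_def by blast+
  have q: "2 \<le> q" unfolding q_def by (rule card_field_ge_2)
  then have a: "a 0 = \<iota> f" "\<And>i. 2 * degree f < i \<Longrightarrow> a i = 0" "\<And>i. a i \<in> K"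
    using skc_drinfeld_phi_rank_two[OF K hom \<open>range \<iota> \<subseteq> K\<close> assms(4,6)] unfolding a_def phi_def by auto
  have "\<iota> f \<noteq> 0" "v (\<iota> f) = 1" by (rule is_completion_at_uniformizer[OF assms(1,2)])+
  have "0 < degree f" using assms(1) is_unit_iff_degree by (auto simp: irreducible_def)
  have "irreducible_galois_module q \<iota> phi (galois_group K) (torsion q \<iota> phi f)"
  proof (rule irreducible_galois_module_if_roots[OF K assms(3)])
    show "torsion q \<iota> phi f - {0} = {x. poly F x = 0}"
      unfolding F_def a_def using q a(1,2) \<open>\<iota> f \<noteq> 0\<close> by (intro torsion_eq_roots) (simp_all add: a_def)
    show "poly_over K F" unfolding F_def by (rule poly_over_additive_poly_div_X[OF q K a(3)])
    show "irreducible_over K F"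
      unfolding F_def using a(1) \<open>\<iota> f \<noteq> 0\<close> \<open>v (\<iota> f) = 1\<close> assms(9-11)
      by (intro irreducible_over_additive_poly_div_X[OF q K v a(3)]) (simp_all add: a_def q_def phi_def)
    show "separable_poly F"
      unfolding F_def using is_ring_hom_of_nat_card[OF hom] a(1) \<open>\<iota> f \<noteq> 0\<close>
      by (intro separable_additive_poly_div_X[OF q]) (simp_all add: q_def)
    show "0 < degree F"
      unfolding F_def using assms(10) \<open>0 < degree f\<close>
      by (intro degree_additive_poly_div_X_pos[OF q]) (simp_all add: a_def q_def phi_def)
  qed
  then show ?thesis unfolding q_def phi_def .
qed

end
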